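(* Let $\Delta\ge 4$ be an integer and for positive integers $i,j$ define \[ F(i,j)=(4\Delta-6)\Bigl(\frac{1}{i}+\frac{1}{j}\Bigr)+\Delta^2-6\Delta+3+\frac{6}{\Delta}-(i-j)^2 . \] Then: (a) for every integer $i$ with $3\le i\le \left\lfloor \frac{\Delta+3}{2}\right\rfloor$, the function $j\mapsto F(i,j)$ on the integers $1\le j\le \Delta$ attains its minimum at $j=\Delta$, i.e. $F(i,j)\ge F(i,\Delta)$ for all $1\le j\le \Delta$; (b) for every integer $i$ with $\left\lfloor \frac{\Delta+3}{2}\right\rfloor+1\le i\le \Delta-1$, the function $j\mapsto F(i,j)$ on the integers $1\le j\le \Delta$ attains its minimum at $j=2$, i.e. $F(i,j)\ge F(i,2)$ for all $1\le j\le \Delta$. *)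

theory Defs
  imports Complex_Main
begin

definition F :: "nat \<Rightarrow> nat \<Rightarrow> nat \<Rightarrow> real" where
  "F D i j = (4 * real D - 6) * (1 / real i + 1 / real j) + (real D)^2 - 6 * real D + 3
             + 6 / real D - (real i - real j)^2"

end

theory Submission
  imports Defs
begin

text \<open>For fixed \<open>i\<close>, the difference \<open>F(i,j) - F(i,k)\<close> factors as \<open>(k - j)\<close> times
  \<open>(4\<Delta> - 6)/(jk) - (2i - j - k)\<close>. With \<open>k = \<Delta>\<close> the second factor is nonnegative because
  \<open>2i - j - \<Delta> \<le> 3 - j\<close>, and with \<open>k = 2\<close> it is nonpositive for \<open>j \<ge> 3\<close> because \<open>2i \<ge> \<Delta> + 4\<close>
  makes \<open>j(2i - j - 2)\<close> at least \<open>j(\<Delta> + 2 - j) \<ge> 2\<Delta>\<close> on \<open>3 \<le> j \<le> \<Delta>\<close>.\<close>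

lemma F_diff_factor:
  assumes "j > 0" "k > 0"
  shows "F D i j - F D i k
    = (real k - real j) * ((4 * real D - 6) / (real j * real k) - (2 * real i - real j - real k))"
  using assms by (simp add: F_def field_simps power2_eq_square)

lemma F_ge_F_max:
  assumes "3 \<le> D" "2 * i \<le> D + 3" "1 \<le> j" "j \<le> D"
  shows "F D i D \<le> F D i j"
proof -
  have D3: "real D \<ge> 3" and i: "2 * real i \<le> real D + 3"
    using assms(1,2) by linarith+
  have "2 * real i - real j - real D \<le> (4 * real D - 6) / (real j * real D)"
  proof (cases "j \<ge> 3")
    case True
    have "0 \<le> (4 * real D - 6) / (real j * real D)" using D3 by simp
    then show ?thesis using True i by linarith
  next
    case False
    with assms(3) consider "j = 1" | "j = 2" by linarith
    then show ?thesis
    proof cases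
      case 1
      have "2 \<le> (4 * real D - 6) / real D" using D3 by (simp add: field_simps)
      then show ?thesis using i 1 by simp
    next
      case 2
      have "1 \<le> (4 * real D - 6) / (2 * real D)" using D3 by (simp add: field_simps)
      then show ?thesis using i 2 by simp
    qed
  qed
  moreover have "real j \<le> real D" using assms(4) by simp
  ultimately have "0 \<le> F D i j - F D i D"
    using assms by (simp add: F_diff_factor)
  then show ?thesis by simp
qed

lemma F_ge_F_two:
  assumes "D + 4 \<le> 2 * i" "i < D" "1 \<le> j" "j \<le> D"
  shows "F D i 2 \<le> F D i j"
proof -
  have i: "real D + 4 \<le> 2 * real i" and iD: "real i \<le> real D - 1"
    using assms(1,2) by linarith+
  consider "j = 1" | "j = 2" | "j \<ge> 3" using assms(3) by linarith
  then have "0 \<le> F D i j - F D i 2"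
  proof cases
    case 1
    then show ?thesis using iD by (simp add: F_diff_factor)
  next
    case 2
    then show ?thesis by simp
  next
    case 3
    then have j: "3 \<le> real j" "real j \<le> real D" using assms(4) by simp_all
    have "0 \<le> (real j - 3) * (real D - real j)" using j by simp
    then have "4 * real D - 6 \<le> 2 * real j * (real D + 2 - real j)"
      using j by (simp add: algebra_simps)
    also have "\<dots> \<le> 2 * real j * (2 * real i - real j - 2)"
      using i j by (intro mult_left_mono) auto
    finally have "(4 * real D - 6) / (real j * 2) \<le> 2 * real i - real j - 2"
      using j by (simp add: field_simps)
    then show ?thesis
      using 3 by (simp add: F_diff_factor mult_nonpos_nonpos)
  qed
  then show ?thesis by simp
qed

theorem lemma4p1:
  fixes D :: nat
  assumes "D \<ge> 4"
  shows "(\<forall>i j. 3 \<le> i \<and> i \<le> (D + 3) div 2 \<and> 1 \<le> j \<and> j \<le> D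
            \<longrightarrow> F D i j \<ge> F D i D)
       \<and> (\<forall>i j. (D + 3) div 2 + 1 \<le> i \<and> i \<le> D - 1 \<and> 1 \<le> j \<and> j \<le> D
            \<longrightarrow> F D i j \<ge> F D i 2)"
proof (intro conjI allI impI)
  fix i j assume "3 \<le> i \<and> i \<le> (D + 3) div 2 \<and> 1 \<le> j \<and> j \<le> D"
  moreover from this have "2 * i \<le> D + 3" by linarith
  ultimately show "F D i j \<ge> F D i D" using assms by (intro F_ge_F_max) auto
next
  fix i j assume "(D + 3) div 2 + 1 \<le> i \<and> i \<le> D - 1 \<and> 1 \<le> j \<and> j \<le> D"
  moreover from this have "D + 4 \<le> 2 * i" by linarith
  ultimately show "F D i j \<ge> F D i 2" using assms by (intro F_ge_F_two) auto
qed

end
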